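(* Let $\mathcal M$ be an oriented matroid program of rank $r$ on $[n]\cup\{f,g\}$ with digraph $K_f$, and let $\tilde v$ be a node of $K_f$ that is neither the source nor the sink of $K_f$. Then for each $e\in\tilde v$ there is a cocircuit $Y^{e}$ of $\mathcal M/\{f,g\}$ with $Y^{e}_e=+$ and $Y^e_{e'}\in\{+,0\}$ for all $e'\in\tilde v$. Consequently the composition of the $Y^e$, $e\in\tilde v$, is a covector of $\mathcal M/\{f,g\}$ that is positive on every element of $\tilde v$.
   Context: Oriented matroid conventions: covectors, cocircuits, vectors, circuits, deletion $\setminus$, contraction $/$, rank are as usual; $\underline Y$ is the support; composition $(X\circ Y)_e=X_e$ if $X_e\ne0$, else $Y_e$. A covector is nonnegative if all entries are in $\{+,0\}$. Oriented matroid program: $\mathcal M$ is an oriented matroid of rank $r$ on $E=[n]\cup\{f,g\}$ such that (a) every nonnegative cocircuit $Y$ of $\mathcal M\setminus f$ has $Y_g\neq 0$; (b) for every $e\in[n]$ there is a nonnegative cocircuit $Y$ of $\mathcal M\setminus f$ with $Y_e=+$; (c) every circuit of $\mathcal M$ whose support contains $f$ has support of size $r+1$. Nodes: the sets $v=[n]\setminus\underline Y$, $Y$ a nonnegative cocircuit of $\mathcal M\setminus f$. For each node $v$ let $Y^v$ be the cocircuit of $\mathcal M$ that is nonnegative on $E\setminus\{f\}$, has $Y^v_f\neq0\neq Y^v_g$, and zero set $v$ in $[n]$. Distinct nodes $v,v'$ are adjacent if $v\cap v'$ has rank $r-2$ in $\mathcal M$. For adjacent $v,v'$, let $Y''$ be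 the cocircuit of $\mathcal M$ obtained by eliminating $g$ between $Y^v$ and $-Y^{v'}$; it has $Y''_g=0$, vanishes on $v\cap v'$, is $+$ on $v'\setminus v$, $-$ on $v\setminus v'$, and $Y''_f\ne 0$. $K_f$: arc from $v$ to $v'$ if $Y''_f=Y''_e$ for $e\in v\setminus v'$, otherwise from $v'$ to $v$; it has a unique source and a unique sink. *)

theory Defs
  imports Main
begin

datatype sign = Neg | Zer | Pos

definition sneg :: "sign \<Rightarrow> sign" where
  "sneg s = (case s of Neg \<Rightarrow> Pos | Zer \<Rightarrow> Zer | Pos \<Rightarrow> Neg)"

definition smult :: "sign \<Rightarrow> sign \<Rightarrow> sign" where
  "smult s t = (if s = Zer \<or> t = Zer then Zer else if s = t then Pos else Neg)"

type_synonym 'a svec = "'a \<Rightarrow> sign"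

definition zero_sv :: "'a svec" where
  "zero_sv = (\<lambda>e. Zer)"

definition neg_sv :: "'a svec \<Rightarrow> 'a svec" where
  "neg_sv X = (\<lambda>e. sneg (X e))"

definition supp :: "'a svec \<Rightarrow> 'a set" where
  "supp X = {e. X e \<noteq> Zer}"

definition comp_sv :: "'a svec \<Rightarrow> 'a svec \<Rightarrow> 'a svec" where
  "comp_sv X Y = (\<lambda>e. if X e \<noteq> Zer then X e else Y e)"

definition comp_list :: "'a svec list \<Rightarrow> 'a svec" where
  "comp_list Xs = foldr comp_sv Xs zero_sv"

definition sep :: "'a svec \<Rightarrow> 'a svec \<Rightarrow> 'a set" where
  "sep X Y = {e. X e \<noteq> Zer \<and> Y e = sneg (X e)}"

definition restrict_sv :: "'a set \<Rightarrow> 'a svec \<Rightarrow> 'a svec" where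
  "restrict_sv A X = (\<lambda>e. if e \<in> A then X e else Zer)"

definition orth :: "'a svec \<Rightarrow> 'a svec \<Rightarrow> bool" where
  "orth X Y \<longleftrightarrow> (\<forall>e. smult (X e) (Y e) = Zer)
     \<or> (\<exists>e h. smult (X e) (Y e) = Pos \<and> smult (X h) (Y h) = Neg)"

text \<open>An oriented matroid is a pair (ground set E, set of covectors L); sign vectors
  vanish outside E.  Covector axioms (L0)-(L3) of Bjoerner et al., Def. 4.1.1.\<close>
type_synonym 'a om = "'a set \<times> 'a svec set"

definition ground :: "'a om \<Rightarrow> 'a set" where "ground M = fst M"
definition covectors :: "'a om \<Rightarrow> 'a svec set" where "covectors M = snd M"

definition is_OM :: "'a om \<Rightarrow> bool" where
  "is_OM M \<longleftrightarrow> finite (ground M)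
    \<and> (\<forall>X\<in>covectors M. supp X \<subseteq> ground M)
    \<and> zero_sv \<in> covectors M
    \<and> (\<forall>X\<in>covectors M. neg_sv X \<in> covectors M)
    \<and> (\<forall>X\<in>covectors M. \<forall>Y\<in>covectors M. comp_sv X Y \<in> covectors M)
    \<and> (\<forall>X\<in>covectors M. \<forall>Y\<in>covectors M. \<forall>e\<in>sep X Y.
         \<exists>Z\<in>covectors M. Z e = Zer \<and> (\<forall>h. h \<notin> sep X Y \<longrightarrow> Z h = comp_sv X Y h))"

definition cocircuits :: "'a om \<Rightarrow> 'a svec set" where
  "cocircuits M = {X \<in> covectors M. X \<noteq> zero_sv \<and>
      \<not> (\<exists>Y\<in>covectors M. Y \<noteq> zero_sv \<and> supp Y \<subset> supp X)}"

definition vectors :: "'a om \<Rightarrow> 'a svec set" where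
  "vectors M = {X. supp X \<subseteq> ground M \<and> (\<forall>Y\<in>covectors M. orth X Y)}"

definition circuits :: "'a om \<Rightarrow> 'a svec set" where
  "circuits M = {X \<in> vectors M. X \<noteq> zero_sv \<and>
      \<not> (\<exists>Y\<in>vectors M. Y \<noteq> zero_sv \<and> supp Y \<subset> supp X)}"

definition om_indep :: "'a om \<Rightarrow> 'a set \<Rightarrow> bool" where
  "om_indep M I \<longleftrightarrow> I \<subseteq> ground M \<and> \<not> (\<exists>C\<in>circuits M. supp C \<subseteq> I)"

definition om_rank_of :: "'a om \<Rightarrow> 'a set \<Rightarrow> nat" where
  "om_rank_of M A = Max (card ` {I. I \<subseteq> A \<and> om_indep M I})"

definition om_rank :: "'a om \<Rightarrow> nat" where
  "om_rank M = om_rank_of M (ground M)"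

definition deletion :: "'a om \<Rightarrow> 'a set \<Rightarrow> 'a om" where
  "deletion M A = (ground M - A, restrict_sv (ground M - A) ` covectors M)"

definition contraction :: "'a om \<Rightarrow> 'a set \<Rightarrow> 'a om" where
  "contraction M A = (ground M - A,
     restrict_sv (ground M - A) ` {X \<in> covectors M. \<forall>a\<in>A. X a = Zer})"

definition nonneg_on :: "'a set \<Rightarrow> 'a svec \<Rightarrow> bool" where
  "nonneg_on A X \<longleftrightarrow> (\<forall>e\<in>A. X e \<noteq> Neg)"

definition nonneg :: "'a svec \<Rightarrow> bool" where
  "nonneg X \<longleftrightarrow> (\<forall>e. X e \<noteq> Neg)"

text \<open>\<open>N\<close> plays the role of \<open>[n]\<close>; the ground set is \<open>N \<union> {f,g}\<close>.\<close>
definition OM_program :: "'a om \<Rightarrow> 'a set \<Rightarrow> 'a \<Rightarrow> 'a \<Rightarrow> nat \<Rightarrow> bool" where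
  "OM_program M N f g r \<longleftrightarrow> is_OM M \<and> ground M = N \<union> {f, g} \<and> f \<noteq> g
     \<and> f \<notin> N \<and> g \<notin> N \<and> om_rank M = r
     \<and> (\<forall>Y\<in>cocircuits (deletion M {f}). nonneg Y \<longrightarrow> Y g \<noteq> Zer)
     \<and> (\<forall>e\<in>N. \<exists>Y\<in>cocircuits (deletion M {f}). nonneg Y \<and> Y e = Pos)
     \<and> (\<forall>C\<in>circuits M. f \<in> supp C \<longrightarrow> card (supp C) = r + 1)"

definition is_node :: "'a om \<Rightarrow> 'a set \<Rightarrow> 'a \<Rightarrow> 'a set \<Rightarrow> bool" where
  "is_node M N f v \<longleftrightarrow> (\<exists>Y\<in>cocircuits (deletion M {f}). nonneg Y \<and> v = N - supp Y)"

definition adjacent :: "'a om \<Rightarrow> 'a set \<Rightarrow> 'a \<Rightarrow> nat \<Rightarrow> 'a set \<Rightarrow> 'a set \<Rightarrow> bool" where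
  "adjacent M N f r v v' \<longleftrightarrow> is_node M N f v \<and> is_node M N f v' \<and> v \<noteq> v'
     \<and> om_rank_of M (v \<inter> v') = r - 2"

text \<open>The cocircuit \<open>Y''\<close> obtained by eliminating g between \<open>Y^v\<close> and \<open>-Y^{v'}\<close>.\<close>
definition elim_cocircuit :: "'a om \<Rightarrow> 'a \<Rightarrow> 'a set \<Rightarrow> 'a set \<Rightarrow> 'a svec \<Rightarrow> bool" where
  "elim_cocircuit M g v v' Y \<longleftrightarrow> Y \<in> cocircuits M \<and> Y g = Zer
     \<and> (\<forall>e\<in>v \<inter> v'. Y e = Zer) \<and> (\<forall>e\<in>v' - v. Y e = Pos) \<and> (\<forall>e\<in>v - v'. Y e = Neg)"

definition Kf_arc :: "'a om \<Rightarrow> 'a set \<Rightarrow> 'a \<Rightarrow> 'a \<Rightarrow> nat \<Rightarrow> 'a set \<Rightarrow> 'a set \<Rightarrow> bool" where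
  "Kf_arc M N f g r v v' \<longleftrightarrow> adjacent M N f r v v' \<and>
     (\<exists>Y. elim_cocircuit M g v v' Y \<and> Y f \<noteq> Zer \<and> (\<forall>e\<in>v - v'. Y f = Y e))"

definition Kf_source :: "'a om \<Rightarrow> 'a set \<Rightarrow> 'a \<Rightarrow> 'a \<Rightarrow> nat \<Rightarrow> 'a set \<Rightarrow> bool" where
  "Kf_source M N f g r v \<longleftrightarrow> is_node M N f v \<and> \<not> (\<exists>u. Kf_arc M N f g r u v)"

definition Kf_sink :: "'a om \<Rightarrow> 'a set \<Rightarrow> 'a \<Rightarrow> 'a \<Rightarrow> nat \<Rightarrow> 'a set \<Rightarrow> bool" where
  "Kf_sink M N f g r v \<longleftrightarrow> is_node M N f v \<and> \<not> (\<exists>u. Kf_arc M N f g r v u)"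

end

theory Submission
  imports Defs
begin

text \<open>Lift a nonnegative cocircuit of \<open>M \<setminus> f\<close> that is positive at \<open>e\<close>
  to a covector \<open>P\<close> of \<open>M\<close> with \<open>P\<^sub>g = +\<close>, and eliminate \<open>g\<close> against \<open>-Y\<^sup>v\<close>, which vanishes
  on \<open>v\<close>; the result is still nonnegative on \<open>v\<close> and positive at \<open>e\<close>. An arc of \<open>K\<^sub>f\<close> entering
  \<open>v\<close> yields a covector that is \<open>-\<close> at \<open>f\<close>, \<open>0\<close> at \<open>g\<close> and nonnegative on \<open>v\<close>; an arc
  leaving \<open>v\<close> yields the same with \<open>+\<close> at \<open>f\<close>. Since \<open>v\<close> is neither source nor sink,
  one of them lets us eliminate \<open>f\<close> as well, leaving a covector of \<open>M / {f, g}\<close> that is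
  nonnegative on \<open>v\<close> and positive at \<open>e\<close>. A cocircuit conformal to it is the required \<open>Y\<^sup>e\<close>.\<close>

lemma sneg_simps [simp]: "sneg Neg = Pos" "sneg Zer = Zer" "sneg Pos = Neg"
  by (simp_all add: sneg_def)

lemma sneg_eq_Zer_iff [simp]: "sneg s = Zer \<longleftrightarrow> s = Zer"
  by (cases s) simp_all

lemma sign_eq_Pos: "s \<noteq> Neg \<Longrightarrow> s \<noteq> Zer \<Longrightarrow> s = Pos"
  by (cases s) simp_all

lemma Zer_eq_sneg_iff [simp]: "Zer = sneg s \<longleftrightarrow> s = Zer"
  by (cases s) simp_all

lemma sneg_neq_self: "s \<noteq> Zer \<Longrightarrow> sneg s \<noteq> s"
  by (cases s) simp_all

lemma supp_neg_sv [simp]: "supp (neg_sv X) = supp X"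
  by (simp add: supp_def neg_sv_def)

lemma nonneg_on_comp_sv: "nonneg_on S X \<Longrightarrow> nonneg_on S Y \<Longrightarrow> nonneg_on S (comp_sv X Y)"
  by (simp add: nonneg_on_def comp_sv_def)

lemma sep_disjoint_nonneg_on:
  assumes "nonneg_on S X" "nonneg_on S Y"
  shows "sep X Y \<inter> S = {}"
proof -
  have "h \<notin> sep X Y" if "h \<in> S" for h
    using assms that sign_eq_Pos[of "X h"] by (auto simp: nonneg_on_def sep_def)
  then show ?thesis by blast
qed

definition conformal_le :: "'a svec \<Rightarrow> 'a svec \<Rightarrow> bool" where
  "conformal_le X Y \<longleftrightarrow> (\<forall>e. X e = Zer \<or> X e = Y e)"

lemma conformal_le_refl: "conformal_le X X"
  by (simp add: conformal_le_def)

lemma conformal_le_trans: "conformal_le X Y \<Longrightarrow> conformal_le Y Z \<Longrightarrow> conformal_le X Z"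
  unfolding conformal_le_def by metis

lemma conformal_le_nonneg_on: "conformal_le X Y \<Longrightarrow> nonneg_on S Y \<Longrightarrow> nonneg_on S X"
  unfolding conformal_le_def nonneg_on_def by (metis sign.distinct(1))

lemma comp_list_Pos:
  "\<forall>X\<in>set Xs. X e \<noteq> Neg \<Longrightarrow> \<exists>X\<in>set Xs. X e = Pos \<Longrightarrow> comp_list Xs e = Pos"
  by (induction Xs) (auto simp: comp_list_def comp_sv_def intro: sign_eq_Pos)

section \<open>Covector axioms and conformal cocircuits\<close>

context
  fixes M :: "'a om"
  assumes OM: "is_OM M"
begin

lemma finite_supp_covector: "X \<in> covectors M \<Longrightarrow> finite (supp X)"
  using OM unfolding is_OM_def by (meson finite_subset)

lemma zero_sv_covector: "zero_sv \<in> covectors M"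
  using OM by (simp add: is_OM_def)

lemma neg_sv_covector: "X \<in> covectors M \<Longrightarrow> neg_sv X \<in> covectors M"
  using OM by (simp add: is_OM_def)

lemma comp_sv_covector: "X \<in> covectors M \<Longrightarrow> Y \<in> covectors M \<Longrightarrow> comp_sv X Y \<in> covectors M"
  using OM by (simp add: is_OM_def)

lemma covector_elimination:
  "X \<in> covectors M \<Longrightarrow> Y \<in> covectors M \<Longrightarrow> e \<in> sep X Y \<Longrightarrow>
     \<exists>Z\<in>covectors M. Z e = Zer \<and> (\<forall>h. h \<notin> sep X Y \<longrightarrow> Z h = comp_sv X Y h)"
  using OM unfolding is_OM_def by blast

lemma comp_list_covector: "set Xs \<subseteq> covectors M \<Longrightarrow> comp_list Xs \<in> covectors M"
  by (induction Xs) (simp_all add: comp_list_def zero_sv_covector comp_sv_covector)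

lemma covector_orientation:
  assumes "W \<in> covectors M" "W j \<noteq> Zer" "s \<noteq> Zer"
  shows "\<exists>W'\<in>covectors M. supp W' = supp W \<and> W' j = s"
proof (cases "W j = s")
  case True
  then show ?thesis using assms(1) by blast
next
  case False
  with assms have "neg_sv W j = s"
    by (cases s; cases "W j") (simp_all add: neg_sv_def)
  then show ?thesis using neg_sv_covector[OF assms(1)] supp_neg_sv[of W] by blast
qed

lemma eliminate_nonneg_on:
  assumes X: "X \<in> covectors M" and Y: "Y \<in> covectors M"
    and k: "X k \<noteq> Zer" "Y k = sneg (X k)"
    and nonneg: "nonneg_on S X" "nonneg_on S Y"
  obtains Z where "Z \<in> covectors M" "Z k = Zer" "nonneg_on S Z"
    "\<forall>h\<in>S. X h = Pos \<longrightarrow> Z h = Pos" "\<forall>h. X h = Zer \<longrightarrow> Y h = Zer \<longrightarrow> Z h = Zer"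
proof -
  have "k \<in> sep X Y" using k by (simp add: sep_def)
  then obtain Z where Z: "Z \<in> covectors M" "Z k = Zer"
      and agree: "\<forall>h. h \<notin> sep X Y \<longrightarrow> Z h = comp_sv X Y h"
    using covector_elimination X Y by blast
  have on_S: "\<forall>h\<in>S. Z h = comp_sv X Y h"
    using agree sep_disjoint_nonneg_on[OF nonneg] by blast
  then have "nonneg_on S Z"
    using nonneg_on_comp_sv[OF nonneg] by (simp add: nonneg_on_def)
  moreover have "\<forall>h\<in>S. X h = Pos \<longrightarrow> Z h = Pos"
    using on_S by (simp add: comp_sv_def)
  moreover have "\<forall>h. X h = Zer \<longrightarrow> Y h = Zer \<longrightarrow> Z h = Zer"
    using agree by (simp add: sep_def comp_sv_def)
  ultimately show thesis using that Z by blast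
qed

lemma eliminate_separation:
  assumes X: "X \<in> covectors M" and Y: "Y \<in> covectors M"
    and supp: "supp Y \<subseteq> supp X" and k: "k \<in> sep X Y"
  obtains Z where "Z \<in> covectors M" "supp Z \<subset> supp X" "sep X Z \<subseteq> sep X Y - {k}"
    "\<forall>h. h \<notin> sep X Y \<longrightarrow> Z h = X h"
proof -
  obtain Z where Z: "Z \<in> covectors M" "Z k = Zer"
      and agree: "\<forall>h. h \<notin> sep X Y \<longrightarrow> Z h = comp_sv X Y h"
    using covector_elimination X Y k by blast
  have "comp_sv X Y h = X h" for h
    using supp by (auto simp: comp_sv_def supp_def)
  with agree have agree': "\<forall>h. h \<notin> sep X Y \<longrightarrow> Z h = X h" by simp
  have "supp Z \<subseteq> supp X"
    using agree' by (auto simp: supp_def sep_def)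
  moreover have "k \<in> supp X" "k \<notin> supp Z"
    using k Z(2) by (auto simp: supp_def sep_def)
  moreover have "sep X Z \<subseteq> sep X Y - {k}"
  proof
    fix h assume "h \<in> sep X Z"
    then have "X h \<noteq> Zer" "Z h = sneg (X h)" by (auto simp: sep_def)
    moreover from this have "h \<in> sep X Y" using agree' sneg_neq_self by metis
    ultimately show "h \<in> sep X Y - {k}" using Z(2) by auto
  qed
  ultimately show thesis using that Z(1) agree' by blast
qed

text \<open>Separations of \<open>Y\<close> from \<open>X\<close> are eliminated one at a time; each elimination keeps
  the support inside that of \<open>X\<close> and the sign at \<open>e\<close>.\<close>
lemma conformal_covector_below:
  assumes "X \<in> covectors M" "X e \<noteq> Zer"
  shows "Y \<in> covectors M \<Longrightarrow> supp Y \<subset> supp X \<Longrightarrow> Y e = X e \<Longrightarrow>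
    \<exists>Z\<in>covectors M. conformal_le Z X \<and> Z e = X e \<and> supp Z \<subset> supp X"
proof (induction Y rule: measure_induct_rule[where f = "\<lambda>Y. card (sep X Y)"])
  case (less Y)
  show ?case
  proof (cases "sep X Y = {}")
    case True
    have "conformal_le Y X"
      unfolding conformal_le_def
    proof
      fix j
      have "Y j \<noteq> Zer \<Longrightarrow> X j \<noteq> Zer" using less.prems(2) by (auto simp: supp_def)
      moreover have "X j = Zer \<or> Y j \<noteq> sneg (X j)" using True by (auto simp: sep_def)
      ultimately show "Y j = Zer \<or> Y j = X j"
        by (cases "Y j"; cases "X j") simp_all
    qed
    then show ?thesis using less.prems by blast
  next
    case False
    then obtain k where k: "k \<in> sep X Y" by blast
    have "supp Y \<subseteq> supp X" using less.prems(2) by blast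
    then obtain Z where Z: "Z \<in> covectors M" "supp Z \<subset> supp X" "sep X Z \<subseteq> sep X Y - {k}"
        and agree: "\<forall>h. h \<notin> sep X Y \<longrightarrow> Z h = X h"
      by (rule eliminate_separation[OF assms(1) less.prems(1) _ k])
    have "e \<notin> sep X Y"
      using less.prems(3) assms(2) by (cases "X e") (auto simp: sep_def)
    then have "Z e = X e" using agree by blast
    have fin: "finite (sep X Y)"
      using finite_supp_covector[OF assms(1)] by (rule rev_finite_subset) (auto simp: sep_def supp_def)
    have "card (sep X Z) \<le> card (sep X Y - {k})"
      using Z(3) fin by (intro card_mono) auto
    also have "\<dots> < card (sep X Y)"
      using fin k by (rule card_Diff1_less)
    finally have "card (sep X Z) < card (sep X Y)" .
    then show ?thesis using less.IH[of Z] Z(1,2) \<open>Z e = X e\<close> by blast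
  qed
qed

lemma smaller_conformal_covector:
  assumes X: "X \<in> covectors M" "X e \<noteq> Zer" and not_cocircuit: "X \<notin> cocircuits M"
  obtains Z where "Z \<in> covectors M" "conformal_le Z X" "Z e = X e" "supp Z \<subset> supp X"
proof -
  have "X \<noteq> zero_sv" using X(2) by (auto simp: zero_sv_def)
  with X(1) not_cocircuit obtain W where W: "W \<in> covectors M" "W \<noteq> zero_sv" "supp W \<subset> supp X"
    unfolding cocircuits_def by blast
  show thesis
  proof (cases "W e = Zer")
    case False
    then obtain W' where W': "W' \<in> covectors M" "supp W' = supp W" "W' e = X e"
      using covector_orientation[OF W(1) False X(2)] by blast
    then have "supp W' \<subset> supp X" using W(3) by simp
    then show thesis using conformal_covector_below[OF X W'(1) _ W'(3)] that by blast
  next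
    case True
    obtain j where j: "W j \<noteq> Zer" using W(2) unfolding zero_sv_def by blast
    then have Xj: "X j \<noteq> Zer" using W(3) by (auto simp: supp_def)
    then have "sneg (X j) \<noteq> Zer" by simp
    then obtain W' where W': "W' \<in> covectors M" "supp W' = supp W" "W' j = sneg (X j)"
      using covector_orientation[OF W(1) j] by blast
    have "supp W' \<subseteq> supp X" using W'(2) W(3) by simp
    moreover have "j \<in> sep X W'" using Xj W'(3) by (simp add: sep_def)
    ultimately obtain Z where Z: "Z \<in> covectors M" "supp Z \<subset> supp X"
        and "sep X Z \<subseteq> sep X W' - {j}" and agree: "\<forall>h. h \<notin> sep X W' \<longrightarrow> Z h = X h"
      by (rule eliminate_separation[OF X(1) W'(1)])
    have "W' e = Zer" using True W'(2) by (auto simp: supp_def)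
    then have "e \<notin> sep X W'" using X(2) by (simp add: sep_def)
    then have "Z e = X e" using agree by blast
    then show thesis using conformal_covector_below[OF X Z(1,2)] that by blast
  qed
qed

lemma conformal_cocircuit:
  "X \<in> covectors M \<Longrightarrow> X e \<noteq> Zer \<Longrightarrow> \<exists>C\<in>cocircuits M. conformal_le C X \<and> C e = X e"
proof (induction X rule: measure_induct_rule[where f = "\<lambda>X. card (supp X)"])
  case (less X)
  show ?case
  proof (cases "X \<in> cocircuits M")
    case True
    then show ?thesis using conformal_le_refl by blast
  next
    case False
    then obtain Z where Z: "Z \<in> covectors M" "conformal_le Z X" "Z e = X e" "supp Z \<subset> supp X"
      using smaller_conformal_covector less.prems by blast
    then have "card (supp Z) < card (supp X)"
      using finite_supp_covector[OF less.prems(1)] by (rule_tac psubset_card_mono) auto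
    then obtain C where "C \<in> cocircuits M" "conformal_le C Z" "C e = Z e"
      using less.IH[of Z] Z(1,3) less.prems(2) by auto
    then show ?thesis using Z(2,3) conformal_le_trans[of C Z X] by auto
  qed
qed

end

lemma supp_deletion_covector:
  "Y \<in> covectors (deletion M A) \<Longrightarrow> supp Y \<subseteq> ground M - A"
  by (auto simp: deletion_def covectors_def ground_def restrict_sv_def supp_def split: if_splits)

lemma deletion_covector_lift:
  assumes OM: "is_OM M" and Y: "Y \<in> covectors (deletion M A)"
  shows "\<exists>P\<in>covectors M. \<forall>h. h \<notin> A \<longrightarrow> P h = Y h"
proof -
  obtain P where P: "P \<in> covectors M" and Y_eq: "Y = restrict_sv (ground M - A) P"
    using Y by (auto simp: deletion_def covectors_def ground_def)
  have "P h = Zer" if "h \<notin> ground M" for h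
    using OM P that by (auto simp: is_OM_def supp_def)
  then have "\<forall>h. h \<notin> A \<longrightarrow> P h = Y h"
    by (simp add: Y_eq restrict_sv_def)
  with P show ?thesis by blast
qed

lemma covectors_contraction:
  assumes OM: "is_OM M"
  shows "covectors (contraction M A) = {X \<in> covectors M. \<forall>a\<in>A. X a = Zer}"
proof -
  have "restrict_sv (ground M - A) X = X" if "X \<in> covectors M" "\<forall>a\<in>A. X a = Zer" for X
  proof
    fix e
    have "X e = Zer" if "e \<notin> ground M"
      using OM \<open>X \<in> covectors M\<close> that by (auto simp: is_OM_def supp_def)
    then show "restrict_sv (ground M - A) X e = X e"
      using that(2) by (auto simp: restrict_sv_def)
  qed
  then show ?thesis
    by (force simp: contraction_def covectors_def ground_def)
qed

lemma is_OM_contraction: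
  assumes OM: "is_OM M"
  shows "is_OM (contraction M A)"
proof -
  have ground: "ground (contraction M A) = ground M - A"
    by (simp add: contraction_def ground_def)
  have elim: "\<exists>Z\<in>covectors (contraction M A). Z e = Zer \<and>
      (\<forall>h. h \<notin> sep X Y \<longrightarrow> Z h = comp_sv X Y h)"
    if XY: "X \<in> covectors (contraction M A)" "Y \<in> covectors (contraction M A)"
      and e: "e \<in> sep X Y" for X Y e
  proof -
    have "X \<in> covectors M" "Y \<in> covectors M"
      using XY by (simp_all add: covectors_contraction[OF OM])
    then obtain Z where Z: "Z \<in> covectors M" "Z e = Zer"
        and agree: "\<forall>h. h \<notin> sep X Y \<longrightarrow> Z h = comp_sv X Y h"
      using covector_elimination[OF OM _ _ e] by blast
    have "Z a = Zer" if "a \<in> A" for a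
      using agree XY that
      by (auto simp: covectors_contraction[OF OM] sep_def comp_sv_def)
    then show ?thesis using Z agree by (auto simp: covectors_contraction[OF OM])
  qed
  show ?thesis
    unfolding is_OM_def ground
    using OM elim
    by (auto simp: is_OM_def covectors_contraction[OF OM] zero_sv_def neg_sv_def comp_sv_def supp_def)
qed

section \<open>Oriented matroid programs\<close>

context
  fixes M :: "'a om" and N :: "'a set" and f g :: 'a and r :: nat
  assumes prog: "OM_program M N f g r"
begin

lemma program_is_OM: "is_OM M"
  using prog by (simp add: OM_program_def)

lemma nonneg_deletion_cocircuit_g:
  "Y \<in> cocircuits (deletion M {f}) \<Longrightarrow> nonneg Y \<Longrightarrow> Y g = Pos"
  using prog sign_eq_Pos by (auto simp: OM_program_def nonneg_def)

lemma nonneg_deletion_cocircuit_lift: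
  assumes Y: "Y \<in> cocircuits (deletion M {f})" "nonneg Y"
  obtains P where "P \<in> covectors M" "P g = Pos" "\<forall>h\<in>N. P h = Y h"
proof -
  have "f \<noteq> g" "f \<notin> N" using prog by (auto simp: OM_program_def)
  moreover have "Y \<in> covectors (deletion M {f})"
    using Y(1) by (simp add: cocircuits_def)
  then obtain P where "P \<in> covectors M" "\<forall>h. h \<notin> {f} \<longrightarrow> P h = Y h"
    using deletion_covector_lift[OF program_is_OM] by blast
  ultimately show thesis
    using that nonneg_deletion_cocircuit_g[OF Y] by (metis singletonD)
qed

lemma node_subset: "is_node M N f v \<Longrightarrow> v \<subseteq> N"
  by (auto simp: is_node_def)

lemma nodes_incomparable:
  assumes u: "is_node M N f u" and w: "is_node M N f w" and "u \<subseteq> w"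
  shows "u = w"
proof -
  obtain Yu where Yu: "Yu \<in> cocircuits (deletion M {f})" "nonneg Yu" "u = N - supp Yu"
    using u by (auto simp: is_node_def)
  obtain Yw where Yw: "Yw \<in> cocircuits (deletion M {f})" "nonneg Yw" "w = N - supp Yw"
    using w by (auto simp: is_node_def)
  have "ground M - {f} = insert g N"
    using prog by (auto simp: OM_program_def)
  moreover have "Yw \<in> covectors (deletion M {f})"
    using Yw(1) by (simp add: cocircuits_def)
  ultimately have "supp Yw \<subseteq> insert g N"
    using supp_deletion_covector by blast
  moreover have "g \<in> supp Yu"
    using nonneg_deletion_cocircuit_g[OF Yu(1,2)] by (simp add: supp_def)
  ultimately have "supp Yw \<subseteq> supp Yu"
    using \<open>u \<subseteq> w\<close> Yu(3) Yw(3) by blast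
  moreover have "\<not> supp Yw \<subset> supp Yu"
    using Yu(1) Yw(1) by (auto simp: cocircuits_def)
  ultimately show "u = w"
    using Yu(3) Yw(3) by blast
qed

text \<open>The cocircuit \<open>Y''\<close> of an arc from \<open>u\<close> to \<open>v\<close> is negative at \<open>f\<close>: it agrees at \<open>f\<close>
  with its sign on \<open>u - v\<close>, which is nonempty because distinct nodes are incomparable.\<close>
lemma Kf_arc_covector:
  assumes "Kf_arc M N f g r u v"
  shows "\<exists>Y\<in>covectors M. Y f = Neg \<and> Y g = Zer \<and> nonneg_on v Y \<and> (\<forall>h\<in>u. Y h \<noteq> Pos)"
proof -
  obtain Y where adj: "adjacent M N f r u v" and Y: "elim_cocircuit M g u v Y" "\<forall>e\<in>u - v. Y f = Y e"
    using assms by (auto simp: Kf_arc_def)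
  have "\<not> u \<subseteq> v"
    using adj nodes_incomparable by (auto simp: adjacent_def)
  then obtain e where "e \<in> u - v" by blast
  then have "Y f = Neg"
    using Y by (auto simp: elim_cocircuit_def)
  moreover have "Y h \<noteq> Neg" if "h \<in> v" for h
    using Y(1) that by (cases "h \<in> u") (auto simp: elim_cocircuit_def)
  moreover have "Y h \<noteq> Pos" if "h \<in> u" for h
    using Y(1) that by (cases "h \<in> v") (auto simp: elim_cocircuit_def)
  ultimately show ?thesis
    using Y(1) by (auto simp: elim_cocircuit_def cocircuits_def nonneg_on_def)
qed

lemma interior_node_f_covector:
  assumes "\<not> Kf_source M N f g r v" "\<not> Kf_sink M N f g r v" "is_node M N f v" "s \<noteq> Zer"
  shows "\<exists>A\<in>covectors M. A f = s \<and> A g = Zer \<and> nonneg_on v A"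
proof (cases s)
  case Neg
  obtain u where "Kf_arc M N f g r u v"
    using assms(1,3) by (auto simp: Kf_source_def)
  then show ?thesis
    using Kf_arc_covector Neg by blast
next
  case Pos
  obtain w where "Kf_arc M N f g r v w"
    using assms(2,3) by (auto simp: Kf_sink_def)
  then obtain Y where "Y \<in> covectors M" "Y f = Neg" "Y g = Zer" "\<forall>h\<in>v. Y h \<noteq> Pos"
    using Kf_arc_covector by blast
  then have "neg_sv Y \<in> covectors M" "neg_sv Y f = s" "neg_sv Y g = Zer" "nonneg_on v (neg_sv Y)"
    using neg_sv_covector[OF program_is_OM] Pos
    by (auto simp: neg_sv_def nonneg_on_def sneg_def split: sign.splits)
  then show ?thesis by blast
qed (use assms(4) in simp)

lemma node_positive_covector_vanishing_at_g:
  assumes node: "is_node M N f v" and e: "e \<in> v"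
  obtains X where "X \<in> covectors M" "X g = Zer" "nonneg_on v X" "X e = Pos"
proof -
  have OM: "is_OM M" by (rule program_is_OM)
  have v: "v \<subseteq> N" using node by (rule node_subset)
  obtain Yv where Yv: "Yv \<in> cocircuits (deletion M {f})" "nonneg Yv" "v = N - supp Yv"
    using node by (auto simp: is_node_def)
  obtain Q where Q: "Q \<in> covectors M" "Q g = Pos" "\<forall>h\<in>N. Q h = Yv h"
    using nonneg_deletion_cocircuit_lift[OF Yv(1,2)] by blast
  have Q_nonneg: "nonneg_on v (neg_sv Q)"
    using Q(3) Yv(3) by (auto simp: nonneg_on_def neg_sv_def supp_def)
  have "\<forall>e\<in>N. \<exists>Y\<in>cocircuits (deletion M {f}). nonneg Y \<and> Y e = Pos"
    using prog by (simp add: OM_program_def)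
  then obtain Ye where Ye: "Ye \<in> cocircuits (deletion M {f})" "nonneg Ye" "Ye e = Pos"
    using e v by blast
  obtain P where P: "P \<in> covectors M" "P g = Pos" "\<forall>h\<in>N. P h = Ye h"
    using nonneg_deletion_cocircuit_lift[OF Ye(1,2)] by blast
  have P_nonneg: "nonneg_on v P" and "P e = Pos"
    using P(3) Ye(2,3) v e by (auto simp: nonneg_on_def nonneg_def)
  have Pg: "P g \<noteq> Zer" and Qg: "neg_sv Q g = sneg (P g)"
    using P(2) Q(2) by (simp_all add: neg_sv_def)
  obtain X where "X \<in> covectors M" "X g = Zer" "nonneg_on v X"
      and "\<forall>h\<in>v. P h = Pos \<longrightarrow> X h = Pos"
      and "\<forall>h. P h = Zer \<longrightarrow> neg_sv Q h = Zer \<longrightarrow> X h = Zer"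
    by (rule eliminate_nonneg_on[OF OM P(1) neg_sv_covector[OF OM Q(1)] Pg Qg P_nonneg Q_nonneg])
  then show thesis using that \<open>P e = Pos\<close> e by blast
qed

lemma node_positive_covector:
  assumes node: "is_node M N f v" and interior: "\<not> Kf_source M N f g r v" "\<not> Kf_sink M N f g r v"
    and e: "e \<in> v"
  shows "\<exists>T\<in>covectors (contraction M {f, g}). T e = Pos \<and> nonneg_on v T"
proof -
  have OM: "is_OM M" by (rule program_is_OM)
  obtain X where X: "X \<in> covectors M" "X g = Zer" "nonneg_on v X" "X e = Pos"
    using node_positive_covector_vanishing_at_g[OF node e] by blast
  obtain T where T: "T \<in> covectors M" "T f = Zer" "T g = Zer" "nonneg_on v T" "T e = Pos"
  proof (cases "X f = Zer")
    case True
    then show thesis using that X by blast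
  next
    case False
    then have "sneg (X f) \<noteq> Zer" by simp
    then obtain A where A: "A \<in> covectors M" "A f = sneg (X f)" "A g = Zer" "nonneg_on v A"
      using interior_node_f_covector[OF interior node] by blast
    obtain T where "T \<in> covectors M" "T f = Zer" "nonneg_on v T"
        and "\<forall>h\<in>v. X h = Pos \<longrightarrow> T h = Pos" and "\<forall>h. X h = Zer \<longrightarrow> A h = Zer \<longrightarrow> T h = Zer"
      by (rule eliminate_nonneg_on[OF OM X(1) A(1) False A(2) X(3) A(4)])
    then show thesis
      using that X(2,4) A(3) e by simp
  qed
  then show ?thesis
    by (auto simp: covectors_contraction[OF OM])
qed

lemma node_positive_cocircuit:
  assumes "is_node M N f v" "\<not> Kf_source M N f g r v" "\<not> Kf_sink M N f g r v" "e \<in> v"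
  shows "\<exists>C\<in>cocircuits (contraction M {f, g}). C e = Pos \<and> nonneg_on v C"
proof -
  obtain T where T: "T \<in> covectors (contraction M {f, g})" "T e = Pos" "nonneg_on v T"
    using node_positive_covector[OF assms] by blast
  then obtain C where "C \<in> cocircuits (contraction M {f, g})" "conformal_le C T" "C e = Pos"
    using conformal_cocircuit[OF is_OM_contraction[OF program_is_OM] T(1), of e] T(2) by auto
  then show ?thesis
    using conformal_le_nonneg_on T(3) by blast
qed

end

theorem lemma5p5:
  fixes M :: "'a om" and N :: "'a set" and f g :: 'a and r :: nat and v :: "'a set"
  assumes "OM_program M N f g r"
    and "is_node M N f v"
    and "\<not> Kf_source M N f g r v"
    and "\<not> Kf_sink M N f g r v"
  shows "\<exists>Ys :: 'a \<Rightarrow> 'a svec.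
           (\<forall>e\<in>v. Ys e \<in> cocircuits (contraction M {f, g}) \<and> Ys e e = Pos
                  \<and> nonneg_on v (Ys e))
         \<and> (\<forall>es. set es = v \<longrightarrow>
              comp_list (map Ys es) \<in> covectors (contraction M {f, g})
              \<and> (\<forall>e\<in>v. comp_list (map Ys es) e = Pos))"
proof -
  obtain Ys where Ys: "\<forall>e\<in>v. Ys e \<in> cocircuits (contraction M {f, g}) \<and> Ys e e = Pos
      \<and> nonneg_on v (Ys e)"
    using node_positive_cocircuit[OF assms] by metis
  have "comp_list (map Ys es) \<in> covectors (contraction M {f, g})
      \<and> (\<forall>e\<in>v. comp_list (map Ys es) e = Pos)" if "set es = v" for es
  proof
    show "comp_list (map Ys es) \<in> covectors (contraction M {f, g})"
      by (rule comp_list_covector[OF is_OM_contraction[OF program_is_OM[OF assms(1)]]])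
        (use Ys that in \<open>auto simp: cocircuits_def\<close>)
    show "\<forall>e\<in>v. comp_list (map Ys es) e = Pos"
    proof
      fix e assume "e \<in> v"
      then show "comp_list (map Ys es) e = Pos"
        by (intro comp_list_Pos) (use Ys that in \<open>auto simp: nonneg_on_def\<close>)
    qed
  qed
  with Ys show ?thesis by blast
qed

end
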